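(* Let $\mathscr{A}$ be a closed set of games and $(\mathcal{Q},\mathcal{P})$ a reduced bipartite monoid. The following are equivalent: (i) $(\mathcal{Q},\mathcal{P})\cong\mathcal{Q}(\mathscr{A})$; (ii) there exists a surjective monoid homomorphism $\Phi:\mathscr{A}\to\mathcal{Q}$ (with respect to disjunctive sum on $\mathscr{A}$) such that for every $G\in\mathscr{A}$: $\Phi(G)\in\mathcal{P}$ if and only if $G\neq0$ and $\Phi(G')\notin\mathcal{P}$ for every option $G'$ of $G$.
   Context: Games are finite, loopfree impartial games identified with the finite set of their options ($0=\{\}$); disjunctive sum $G+H=\{G'+H\}\cup\{G+H'\}$, making any set of games closed under $+$ and containing $0$ a commutative monoid. Misère outcome: $o^-(G)=\mathscr{P}$ iff $G\neq0$ and every option has outcome $\mathscr{N}$; otherwise $\mathscr{N}$. A set of games is closed if it contains all options of its members and is closed under $+$. For closed $\mathscr{A}$: $G\equiv_\mathscr{A}H$ iff $o^-(G+X)=o^-(H+X)$ for all $X\in\mathscr{A}$; $\mathcal{Q}(\mathscr{A})$ is the bipartite monoid of $\equiv_\mathscr{A}$-classes ($[G][H]=[G+H]$) with distinguished subset the classes of misère $\mathscr{P}$-positions. A bipartite monoid is a pair (commutative monoid, subset); isomorphism means monoid isomorphism carrying the subset onto the subset. $(\mathcal{Q},\mathcal{P})$ is reduced if for any distinct $x,y\in\mathcal{Q}$ there is $z$ with exactly one of $xz,yz$ in $\mathcal{P}$. *)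

theory Defs
  imports Main "HOL-Library.FSet"
begin

text \<open>Finite loopfree impartial games, identified with the finite set of their options
  (a game is its fset of options; equality is extensional).\<close>
datatype game = Game (opts: "game fset")

lemma opts_size_less: "G' |\<in>| opts G \<Longrightarrow> size G' < size G"
proof (cases G)
  case (Game S)
  assume "G' |\<in>| opts G"
  then have m: "G' \<in> fset S" using Game by simp
  have "Suc (size G') \<le> (\<Sum>x\<in>fset S. Suc (size x))"
    using m by (intro member_le_sum[where f="\<lambda>x. Suc (size x)", simplified]) auto
  then show ?thesis using Game by simp
qed

instantiation game :: zero
begin
definition zero_game :: game where "zero_game = Game {||}"
instance ..
end

function gsum :: "game \<Rightarrow> game \<Rightarrow> game" where
  "gsum G H = Game ((\<lambda>G'. gsum G' H) |`| opts G |\<union>| (\<lambda>H'. gsum G H') |`| opts H)"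
  by auto
termination
  by (relation "measure (\<lambda>(G, H). size G + size H)") (auto dest: opts_size_less)

instantiation game :: plus
begin
definition plus_game :: "game \<Rightarrow> game \<Rightarrow> game" where "plus_game = gsum"
instance ..
end

text \<open>Misere outcome: misere_P G holds iff the outcome of G is P
  (G is nonzero and every option has outcome N); otherwise the outcome is N.\<close>
function misere_P :: "game \<Rightarrow> bool" where
  "misere_P G = (opts G \<noteq> {||} \<and> (\<forall>G'\<in>fset (opts G). \<not> misere_P G'))"
  by auto
termination
  by (relation "measure size") (auto dest: opts_size_less)

definition closed_games :: "game set \<Rightarrow> bool" where
  "closed_games A \<longleftrightarrow> (\<forall>G\<in>A. \<forall>G'\<in>fset (opts G). G' \<in> A) \<and> (\<forall>G\<in>A. \<forall>H\<in>A. G + H \<in> A)"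

definition equiv_mod :: "game set \<Rightarrow> game \<Rightarrow> game \<Rightarrow> bool" where
  "equiv_mod A G H \<longleftrightarrow> (\<forall>X\<in>A. misere_P (G + X) = misere_P (H + X))"

definition mq_class :: "game set \<Rightarrow> game \<Rightarrow> game set" where
  "mq_class A G = {H \<in> A. equiv_mod A G H}"

definition mq_carrier :: "game set \<Rightarrow> game set set" where
  "mq_carrier A = mq_class A ` A"

definition mq_mult :: "game set \<Rightarrow> game set \<Rightarrow> game set \<Rightarrow> game set" where
  "mq_mult A c d = mq_class A ((SOME G. G \<in> c) + (SOME H. H \<in> d))"

definition mq_one :: "game set \<Rightarrow> game set" where
  "mq_one A = mq_class A 0"

definition mq_P :: "game set \<Rightarrow> game set set" where
  "mq_P A = mq_class A ` {G \<in> A. misere_P G}"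

text \<open>Abstract bipartite monoids are (Q,P) with Q a commutative monoid type and P a subset.\<close>
definition reduced_bipartite :: "('q::comm_monoid_add) set \<Rightarrow> bool" where
  "reduced_bipartite P \<longleftrightarrow> (\<forall>x y. x \<noteq> y \<longrightarrow> (\<exists>z. (x + z \<in> P) \<noteq> (y + z \<in> P)))"

definition iso_to_mq :: "('q::comm_monoid_add) set \<Rightarrow> game set \<Rightarrow> bool" where
  "iso_to_mq P A \<longleftrightarrow> (\<exists>f :: 'q \<Rightarrow> game set.
      bij_betw f UNIV (mq_carrier A) \<and>
      f 0 = mq_one A \<and>
      (\<forall>x y. f (x + y) = mq_mult A (f x) (f y)) \<and>
      f ` P = mq_P A)"

end

theory Submission
  imports Defs
begin

(* A surjective homomorphism \<Phi> from A onto Q that maps misere P-positions exactly onto P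
   satisfies o(G + X) = P iff \<Phi> G + \<Phi> X \<in> P.  Hence \<Phi> G = \<Phi> H forces G \<equiv>_A H, and,
   because (Q, P) is reduced and \<Phi> is surjective, the converse holds as well: \<Phi> factors
   through a bijection between Q and the misere quotient, which is an isomorphism of
   bipartite monoids.  Conversely an isomorphism composed with the quotient map is such a
   \<Phi>.  Finally, by induction on games, the recursive condition in (ii) says precisely that
   \<Phi> maps P-positions onto P. *)

declare gsum.simps [simp del] misere_P.simps [simp del]

lemma bij_betw_factor:
  assumes "\<phi> ` A = B" "\<psi> ` A = C"
    and "\<And>x y. x \<in> A \<Longrightarrow> y \<in> A \<Longrightarrow> \<phi> x = \<phi> y \<longleftrightarrow> \<psi> x = \<psi> y"
  obtains h where "bij_betw h B C" "\<And>x. x \<in> A \<Longrightarrow> h (\<phi> x) = \<psi> x"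
proof
  define h where "h b = \<psi> (inv_into A \<phi> b)" for b
  show h\<phi>: "h (\<phi> x) = \<psi> x" if "x \<in> A" for x
  proof -
    have "inv_into A \<phi> (\<phi> x) \<in> A" "\<phi> (inv_into A \<phi> (\<phi> x)) = \<phi> x"
      using that by (auto intro: inv_into_into f_inv_into_f)
    then show ?thesis unfolding h_def using assms(3) that by blast
  qed
  have "inj_on h B"
    using assms(1,3) h\<phi> by (auto intro!: inj_onI)
  moreover have "h ` B = C"
    using assms(1,2) h\<phi> by (auto simp: image_image cong: image_cong)
  ultimately show "bij_betw h B C" unfolding bij_betw_def ..
qed

lemma opts_plus_game:
  "opts (G + H) = (\<lambda>G'. G' + H) |`| opts G |\<union>| (\<lambda>H'. G + H') |`| opts H"
  unfolding plus_game_def by (subst gsum.simps) simp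

lemma game_eq_zero_iff: "G = 0 \<longleftrightarrow> opts G = {||}"
  by (metis game.collapse game.sel zero_game_def)

lemma misere_P_iff: "misere_P G \<longleftrightarrow> G \<noteq> 0 \<and> (\<forall>G'\<in>fset (opts G). \<not> misere_P G')"
  by (subst misere_P.simps) (simp add: game_eq_zero_iff)

instance game :: comm_monoid_add
proof
  fix G H K :: game
  show "G + H + K = G + (H + K)"
  proof (induction "size G + size H + size K" arbitrary: G H K rule: less_induct)
    case less
    have "(\<lambda>G'. G' + H + K) |`| opts G = (\<lambda>G'. G' + (H + K)) |`| opts G"
      "(\<lambda>H'. G + H' + K) |`| opts H = (\<lambda>H'. G + (H' + K)) |`| opts H"
      "(\<lambda>K'. G + H + K') |`| opts K = (\<lambda>K'. G + (H + K')) |`| opts K"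
      using less opts_size_less by (auto intro!: fset.map_cong0)
    then show ?case
      by (intro game.expand) (auto simp: opts_plus_game fimage_funion fimage_fimage comp_def)
  qed
  show "G + H = H + G"
  proof (induction "size G + size H" arbitrary: G H rule: less_induct)
    case less
    have "(\<lambda>G'. G' + H) |`| opts G = (\<lambda>G'. H + G') |`| opts G"
      "(\<lambda>H'. G + H') |`| opts H = (\<lambda>H'. H' + G) |`| opts H"
      using less opts_size_less by (auto intro!: fset.map_cong0)
    then show ?case by (intro game.expand) (auto simp: opts_plus_game)
  qed
  show "0 + G = G"
  proof (induction "size G" arbitrary: G rule: less_induct)
    case less
    have "(\<lambda>G'. 0 + G') |`| opts G = opts G"
      using less opts_size_less by (force simp: fimage_iff)
    then show ?case by (intro game.expand) (simp add: opts_plus_game zero_game_def)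
  qed
qed

lemma closed_games_opts: "closed_games A \<Longrightarrow> G \<in> A \<Longrightarrow> G' \<in> fset (opts G) \<Longrightarrow> G' \<in> A"
  unfolding closed_games_def by blast

lemma closed_games_add: "closed_games A \<Longrightarrow> G \<in> A \<Longrightarrow> H \<in> A \<Longrightarrow> G + H \<in> A"
  unfolding closed_games_def by blast

lemma closed_games_zero:
  assumes "closed_games A" and "G \<in> A"
  shows "0 \<in> A"
  using assms(2)
proof (induction "size G" arbitrary: G rule: less_induct)
  case less
  show ?case
  proof (cases "G = 0")
    case False
    then obtain G' where "G' |\<in>| opts G" by (auto simp: game_eq_zero_iff)
    then show ?thesis using less assms(1) opts_size_less closed_games_opts by blast
  qed (use less in simp)
qed

lemma equiv_mod_add:
  assumes A: "closed_games A" "G \<in> A" "H \<in> A" "G' \<in> A"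
    and "equiv_mod A G G'" "equiv_mod A H H'"
  shows "equiv_mod A (G + H) (G' + H')"
  unfolding equiv_mod_def
proof
  fix X assume "X \<in> A"
  then have "H + X \<in> A" "G' + X \<in> A" using A closed_games_add by auto
  then have "misere_P (G + (H + X)) = misere_P (H + (G' + X))"
    "misere_P (H + (G' + X)) = misere_P (H' + (G' + X))"
    using assms(5,6) add.left_commute[of G' H] unfolding equiv_mod_def by auto
  then show "misere_P (G + H + X) = misere_P (G' + H' + X)"
    by (metis add.assoc add.left_commute)
qed

lemma mq_class_self: "G \<in> A \<Longrightarrow> G \<in> mq_class A G"
  unfolding mq_class_def equiv_mod_def by auto

lemma mq_class_eq_iff:
  "G \<in> A \<Longrightarrow> H \<in> A \<Longrightarrow> mq_class A G = mq_class A H \<longleftrightarrow> equiv_mod A G H"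
  unfolding mq_class_def equiv_mod_def by (auto simp: set_eq_iff)

lemma mq_mult_mq_class:
  assumes "closed_games A" "G \<in> A" "H \<in> A"
  shows "mq_mult A (mq_class A G) (mq_class A H) = mq_class A (G + H)"
proof -
  define G1 where "G1 = (SOME G1. G1 \<in> mq_class A G)"
  define H1 where "H1 = (SOME H1. H1 \<in> mq_class A H)"
  have "G1 \<in> mq_class A G" "H1 \<in> mq_class A H"
    unfolding G1_def H1_def using assms mq_class_self by (metis someI)+
  then have "G1 \<in> A" "H1 \<in> A" "equiv_mod A (G + H) (G1 + H1)"
    using assms equiv_mod_add unfolding mq_class_def by auto
  then have "mq_class A (G1 + H1) = mq_class A (G + H)"
    using assms closed_games_add mq_class_eq_iff by (metis equiv_mod_def)
  then show ?thesis unfolding mq_mult_def G1_def [symmetric] H1_def [symmetric] .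
qed

lemma mq_class_in_mq_P_iff:
  assumes "closed_games A" "G \<in> A"
  shows "mq_class A G \<in> mq_P A \<longleftrightarrow> misere_P G"
proof
  assume "mq_class A G \<in> mq_P A"
  then obtain H where "H \<in> A" "misere_P H" "mq_class A H = mq_class A G"
    unfolding mq_P_def by blast
  then have "equiv_mod A H G" using assms(2) mq_class_eq_iff by blast
  moreover have "0 \<in> A" using assms closed_games_zero by blast
  ultimately show "misere_P G" using \<open>misere_P H\<close> unfolding equiv_mod_def by (metis add_0_right)
qed (use assms in \<open>auto simp: mq_P_def\<close>)

definition outcome_epi :: "game set \<Rightarrow> ('q::comm_monoid_add) set \<Rightarrow> (game \<Rightarrow> 'q) \<Rightarrow> bool" where
  "outcome_epi A P \<Phi> \<longleftrightarrow> \<Phi> ` A = UNIV \<and> \<Phi> 0 = 0 \<and>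
    (\<forall>G\<in>A. \<forall>H\<in>A. \<Phi> (G + H) = \<Phi> G + \<Phi> H) \<and> (\<forall>G\<in>A. \<Phi> G \<in> P \<longleftrightarrow> misere_P G)"

lemma recursive_outcome_iff_misere_P:
  assumes "closed_games A"
  shows "(\<forall>G\<in>A. \<Phi> G \<in> P \<longleftrightarrow> (G \<noteq> 0 \<and> (\<forall>G'\<in>fset (opts G). \<Phi> G' \<notin> P))) \<longleftrightarrow>
    (\<forall>G\<in>A. \<Phi> G \<in> P \<longleftrightarrow> misere_P G)" (is "?rec \<longleftrightarrow> ?mis")
proof
  assume rec: ?rec
  show ?mis
  proof
    fix G assume "G \<in> A"
    then show "\<Phi> G \<in> P \<longleftrightarrow> misere_P G"
    proof (induction "size G" arbitrary: G rule: less_induct)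
      case less
      then have "\<forall>G'\<in>fset (opts G). \<Phi> G' \<in> P \<longleftrightarrow> misere_P G'"
        using assms closed_games_opts opts_size_less by blast
      then show ?case using rec less(2) misere_P_iff[of G] by auto
    qed
  qed
next
  assume mis: ?mis
  show ?rec
  proof
    fix G assume "G \<in> A"
    then have "\<forall>G'\<in>fset (opts G). G' \<in> A" using assms closed_games_opts by blast
    then show "\<Phi> G \<in> P \<longleftrightarrow> G \<noteq> 0 \<and> (\<forall>G'\<in>fset (opts G). \<Phi> G' \<notin> P)"
      using mis misere_P_iff[of G] \<open>G \<in> A\<close> by auto
  qed
qed

lemma outcome_epi_misere_P_add:
  assumes "closed_games A" "outcome_epi A P \<Phi>" "G \<in> A" "X \<in> A"
  shows "misere_P (G + X) \<longleftrightarrow> \<Phi> G + \<Phi> X \<in> P"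
proof -
  have "\<Phi> (G + X) = \<Phi> G + \<Phi> X" using assms(2-4) unfolding outcome_epi_def by blast
  moreover have "G + X \<in> A" using assms(1,3,4) closed_games_add by blast
  ultimately show ?thesis using assms(2) unfolding outcome_epi_def by metis
qed

lemma outcome_epi_eq_iff_equiv_mod:
  assumes A: "closed_games A" and "reduced_bipartite P" and \<Phi>: "outcome_epi A P \<Phi>"
    and "G \<in> A" "H \<in> A"
  shows "\<Phi> G = \<Phi> H \<longleftrightarrow> equiv_mod A G H"
proof
  assume "\<Phi> G = \<Phi> H"
  then show "equiv_mod A G H"
    unfolding equiv_mod_def using outcome_epi_misere_P_add[OF A \<Phi>] assms(4,5) by simp
next
  assume equiv: "equiv_mod A G H"
  show "\<Phi> G = \<Phi> H"
  proof (rule ccontr)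
    assume "\<Phi> G \<noteq> \<Phi> H"
    then obtain z where "(\<Phi> G + z \<in> P) \<noteq> (\<Phi> H + z \<in> P)"
      using assms(2) unfolding reduced_bipartite_def by blast
    moreover obtain X where "X \<in> A" "\<Phi> X = z"
      using \<Phi> unfolding outcome_epi_def by (metis UNIV_I imageE)
    ultimately show False
      using equiv outcome_epi_misere_P_add[OF A \<Phi>] assms(4,5) unfolding equiv_mod_def by auto
  qed
qed

lemma outcome_epi_if_iso_to_mq:
  fixes P :: "('q::comm_monoid_add) set"
  assumes A: "closed_games A" and "iso_to_mq P A"
  shows "\<exists>\<Phi>. outcome_epi A P \<Phi>"
proof -
  obtain f :: "'q \<Rightarrow> game set" where bij: "bij_betw f UNIV (mq_carrier A)"
    and f0: "f 0 = mq_one A" and f_add: "\<And>x y. f (x + y) = mq_mult A (f x) (f y)"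
    and fP: "f ` P = mq_P A"
    using assms(2) unfolding iso_to_mq_def by blast
  have inj: "inj f" using bij bij_betw_def by blast
  define \<Phi> where "\<Phi> G = inv f (mq_class A G)" for G
  have f\<Phi>: "f (\<Phi> G) = mq_class A G" if "G \<in> A" for G
    unfolding \<Phi>_def using bij that by (auto simp: bij_betw_def mq_carrier_def f_inv_into_f)
  have "0 \<in> A"
    using bij closed_games_zero[OF A] unfolding bij_betw_def mq_carrier_def by blast
  have "\<Phi> ` A = UNIV"
  proof -
    have "x \<in> \<Phi> ` A" for x
    proof -
      obtain G where "G \<in> A" "f x = mq_class A G"
        using bij unfolding bij_betw_def mq_carrier_def by blast
      then show ?thesis using f\<Phi> inj by (metis image_eqI injD)
    qed
    then show ?thesis by blast
  qed
  moreover have "\<Phi> 0 = 0"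
    using f\<Phi>[OF \<open>0 \<in> A\<close>] f0 inj unfolding mq_one_def by (simp add: injD)
  moreover have "\<Phi> (G + H) = \<Phi> G + \<Phi> H" if "G \<in> A" "H \<in> A" for G H
    using that f\<Phi> f_add mq_mult_mq_class[OF A] closed_games_add[OF A] inj by (metis injD)
  moreover have "\<Phi> G \<in> P \<longleftrightarrow> misere_P G" if "G \<in> A" for G
    using that f\<Phi> fP mq_class_in_mq_P_iff[OF A] inj by (metis inj_image_mem_iff)
  ultimately show ?thesis unfolding outcome_epi_def by blast
qed

lemma iso_to_mq_if_outcome_epi:
  assumes A: "closed_games A" and "reduced_bipartite P" and \<Phi>: "outcome_epi A P \<Phi>"
  shows "iso_to_mq P A"
proof -
  from \<Phi> have surj: "\<Phi> ` A = UNIV" and "\<Phi> 0 = 0"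
    and hom: "\<And>G H. G \<in> A \<Longrightarrow> H \<in> A \<Longrightarrow> \<Phi> (G + H) = \<Phi> G + \<Phi> H"
    and outcome: "\<And>G. G \<in> A \<Longrightarrow> \<Phi> G \<in> P \<longleftrightarrow> misere_P G"
    unfolding outcome_epi_def by auto
  have "0 \<in> A" using surj closed_games_zero[OF A] by blast
  have ker: "\<Phi> G = \<Phi> H \<longleftrightarrow> mq_class A G = mq_class A H" if "G \<in> A" "H \<in> A" for G H
    using outcome_epi_eq_iff_equiv_mod[OF assms that] mq_class_eq_iff[OF that] by simp
  have "mq_class A ` A = mq_carrier A" by (simp add: mq_carrier_def)
  then obtain f where bij: "bij_betw f UNIV (mq_carrier A)"
    and f\<Phi>: "\<And>G. G \<in> A \<Longrightarrow> f (\<Phi> G) = mq_class A G"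
    using bij_betw_factor[OF surj _ ker] by blast
  have "f 0 = mq_one A"
    using f\<Phi>[OF \<open>0 \<in> A\<close>] \<open>\<Phi> 0 = 0\<close> unfolding mq_one_def by simp
  moreover have "f (x + y) = mq_mult A (f x) (f y)" for x y
  proof -
    obtain G H where G: "G \<in> A" "x = \<Phi> G" and H: "H \<in> A" "y = \<Phi> H"
      using surj by (metis UNIV_I imageE)
    then have "f (x + y) = f (\<Phi> (G + H))" using hom by simp
    also have "\<dots> = mq_class A (G + H)" using G H f\<Phi> closed_games_add[OF A] by simp
    also have "\<dots> = mq_mult A (mq_class A G) (mq_class A H)" using G H mq_mult_mq_class[OF A] by simp
    finally show ?thesis using G H f\<Phi> by simp
  qed
  moreover have "f ` P = mq_P A"
  proof -
    have "P = \<Phi> ` {G \<in> A. misere_P G}"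
    proof (intro equalityI subsetI)
      fix x assume "x \<in> P"
      obtain G where "G \<in> A" "x = \<Phi> G" using surj by (metis UNIV_I imageE)
      then show "x \<in> \<Phi> ` {G \<in> A. misere_P G}" using outcome \<open>x \<in> P\<close> by auto
    qed (use outcome in auto)
    then have "f ` P = (\<lambda>G. f (\<Phi> G)) ` {G \<in> A. misere_P G}" by (simp add: image_image)
    also have "\<dots> = mq_P A" unfolding mq_P_def using f\<Phi> by (intro image_cong) auto
    finally show ?thesis .
  qed
  ultimately show ?thesis using bij unfolding iso_to_mq_def by blast
qed

theorem mainTheorem15:
  fixes A :: "game set" and P :: "('q::comm_monoid_add) set"
  assumes "closed_games A" and "reduced_bipartite P"
  shows "iso_to_mq P A \<longleftrightarrow>
    (\<exists>\<Phi> :: game \<Rightarrow> 'q.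
        (\<forall>x. \<exists>G\<in>A. \<Phi> G = x) \<and>
        \<Phi> 0 = 0 \<and>
        (\<forall>G\<in>A. \<forall>H\<in>A. \<Phi> (G + H) = \<Phi> G + \<Phi> H) \<and>
        (\<forall>G\<in>A. \<Phi> G \<in> P \<longleftrightarrow> (G \<noteq> 0 \<and> (\<forall>G'\<in>fset (opts G). \<Phi> G' \<notin> P))))"
proof -
  have rhs_iff: "(\<forall>x. \<exists>G\<in>A. \<Phi> G = x) \<and> \<Phi> 0 = 0 \<and> (\<forall>G\<in>A. \<forall>H\<in>A. \<Phi> (G + H) = \<Phi> G + \<Phi> H) \<and>
      (\<forall>G\<in>A. \<Phi> G \<in> P \<longleftrightarrow> (G \<noteq> 0 \<and> (\<forall>G'\<in>fset (opts G). \<Phi> G' \<notin> P))) \<longleftrightarrow>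
    outcome_epi A P \<Phi>" for \<Phi> :: "game \<Rightarrow> 'q"
  proof -
    have "(\<forall>x. \<exists>G\<in>A. \<Phi> G = x) \<longleftrightarrow> \<Phi> ` A = UNIV" by (auto simp: set_eq_iff image_iff eq_commute)
    then show ?thesis unfolding outcome_epi_def recursive_outcome_iff_misere_P[OF assms(1)] by simp
  qed
  show ?thesis unfolding rhs_iff
    using outcome_epi_if_iso_to_mq[OF assms(1)] iso_to_mq_if_outcome_epi[OF assms] by blast
qed

end
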